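(* Let $G$ be a finite graph with irreducible components $G_1,\dots,G_m$, and let $X$ be its graph C*-correspondence over $A=C(G^{(0)})$. Then for every tracial state $\tau$ of $A$, \[h_X^\tau=\max\{\log\lambda_{G_s}:G_s\text{ is communicated by some vertex }v\text{ with }\tau(p_v)\neq0\}.\]
   Context: $G$ is a finite directed graph with vertex set $G^{(0)}=\{v_1,\dots,v_n\}$, edge set $G^{(1)}$, source and range maps $s,r$; adjacency matrix $G_{ij}=\#\{e:s(e)=v_i,r(e)=v_j\}$. $A=C(G^{(0)})$ is spanned by orthogonal projections $p_v$, $v\in G^{(0)}$; tracial states of $A$ correspond to probability vectors $(\tau(p_{v}))_v$. The graph C*-correspondence $X$ is spanned over $A$ by vectors $x_e$, $e\in G^{(1)}$, with $\langle x_e,x_f\rangle=\delta_{e,f}p_{s(f)}$, $p_vx_e=\delta_{v,r(e)}x_e$, $x_ep_v=\delta_{s(e),v}x_e$; $\{x_e\}$ is a unit decomposition ($\sum_e\theta_{x_e,x_e}=1_X$). For words $\mu=\mu_k\cdots\mu_1$ in edges, $x_\mu=x_{\mu_k}\otimes\cdots\otimes x_{\mu_1}$. $h_X^\tau=\limsup_k k^{-1}\log\sum_{|\mu|=k}\tau(\langle x_\mu,x_\mu\rangle)$, with the convention that this is $0$ if the terms are eventually $0$. Irreducible components: the maximal strongly connected vertex classes, ordered so that $G$ is block upper triangular with irreducible diagonal blocks $G_1,\dots,G_m$ (a vertex on no cycle gives a component $[0]$). $\lambda_{G_s}$ is the spectral radius of $G_s$ ($0$ for $[0]$). $G_s$ is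 communicated by a vertex $v$ if there is a path (possibly of length $0$) starting at $v$ and ending at a vertex of $G_s$. Convention: $\log 0:=0$. *)

theory Defs
  imports "Jordan_Normal_Form.Spectral_Radius" "HOL-Library.Extended_Real"
begin

text \<open>Finite directed (multi)graph: vertices = the finite type 'v, edges = the subset E of the finite
  type 'e, source map src, range map rng.  A = C(G^(0)) is modelled as 'v => real
  (only self-adjoint elements occur); p_v is the indicator of v.\<close>

definition proj :: "'v \<Rightarrow> ('v \<Rightarrow> real)" where
  "proj v = (\<lambda>w. if w = v then 1 else 0)"

text \<open>Words mu = mu_k ... mu_1 are lists [mu_k, ..., mu_1] (head = outermost tensor
  factor).  xinner src rng mu is the A-valued inner product of x_mu with itself, computed
  by the interior tensor product rule <x (x) xi, x (x) xi> = <xi, <x,x> xi>, with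
  <x_e,x_f> = delta p_(s f) and p_v x_f = delta_(v, r f) x_f; x_[] = 1_A.\<close>

fun xinner :: "('e \<Rightarrow> 'v) \<Rightarrow> ('e \<Rightarrow> 'v) \<Rightarrow> 'e list \<Rightarrow> ('v \<Rightarrow> real)" where
  "xinner src rng [] = (\<lambda>_. 1)"
| "xinner src rng [e] = proj (src e)"
| "xinner src rng (e # f # nu) = (\<lambda>w. proj (src e) (rng f) * xinner src rng (f # nu) w)"

text \<open>Tracial state tau given by the probability vector t: tau(a) = sum_v t v * a v.\<close>

definition trace_st :: "('v::finite \<Rightarrow> real) \<Rightarrow> ('v \<Rightarrow> real) \<Rightarrow> real" where
  "trace_st t a = (\<Sum>v\<in>UNIV. t v * a v)"

definition tracial_vec :: "('v::finite \<Rightarrow> real) \<Rightarrow> bool" where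
  "tracial_vec t \<longleftrightarrow> (\<forall>v. 0 \<le> t v) \<and> (\<Sum>v\<in>UNIV. t v) = 1"

definition log0 :: "real \<Rightarrow> real" where
  "log0 x = (if x = 0 then 0 else ln x)"

definition path_sum :: "'e set \<Rightarrow> ('e::finite \<Rightarrow> 'v::finite) \<Rightarrow> ('e \<Rightarrow> 'v) \<Rightarrow> ('v \<Rightarrow> real) \<Rightarrow> nat \<Rightarrow> real" where
  "path_sum E src rng t k = (\<Sum>mu\<in>{mu :: 'e list. length mu = k \<and> set mu \<subseteq> E}. trace_st t (xinner src rng mu))"

definition entropy :: "'e set \<Rightarrow> ('e::finite \<Rightarrow> 'v::finite) \<Rightarrow> ('e \<Rightarrow> 'v) \<Rightarrow> ('v \<Rightarrow> real) \<Rightarrow> ereal" where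
  "entropy E src rng t =
     (if eventually (\<lambda>k. path_sum E src rng t k = 0) sequentially then 0
      else limsup (\<lambda>k. ereal (log0 (path_sum E src rng t k) / real k)))"

definition adj :: "'e set \<Rightarrow> ('e::finite \<Rightarrow> 'v) \<Rightarrow> ('e \<Rightarrow> 'v) \<Rightarrow> 'v \<Rightarrow> 'v \<Rightarrow> nat" where
  "adj E src rng u v = card {e\<in>E. src e = u \<and> rng e = v}"

definition reach :: "'e set \<Rightarrow> ('e \<Rightarrow> 'v) \<Rightarrow> ('e \<Rightarrow> 'v) \<Rightarrow> 'v \<Rightarrow> 'v \<Rightarrow> bool" where
  "reach E src rng u v \<longleftrightarrow> (u, v) \<in> {(src e, rng e) | e. e \<in> E}\<^sup>*"

text \<open>Irreducible components: maximal strongly connected vertex classes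
  (a vertex on no cycle gives a class whose diagonal block is [0]).\<close>
definition components :: "'e set \<Rightarrow> ('e \<Rightarrow> 'v) \<Rightarrow> ('e \<Rightarrow> 'v) \<Rightarrow> 'v set set" where
  "components E src rng = range (\<lambda>v. {w. reach E src rng v w \<and> reach E src rng w v})"

text \<open>Diagonal block G_C of the adjacency matrix (indices enumerated by some bijection
  from {0..<card C}; the spectral radius does not depend on the enumeration).\<close>
definition block_mat :: "'e set \<Rightarrow> ('e::finite \<Rightarrow> 'v) \<Rightarrow> ('e \<Rightarrow> 'v) \<Rightarrow> 'v set \<Rightarrow> complex mat" where
  "block_mat E src rng C =
     (let f = (SOME f. bij_betw f {..<card C} C)
      in mat (card C) (card C) (\<lambda>(i, j). of_nat (adj E src rng (f i) (f j))))"

definition lambda_comp :: "'e set \<Rightarrow> ('e::finite \<Rightarrow> 'v) \<Rightarrow> ('e \<Rightarrow> 'v) \<Rightarrow> 'v set \<Rightarrow> real" where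
  "lambda_comp E src rng C = spectral_radius (block_mat E src rng C)"

definition communicated :: "'e set \<Rightarrow> ('e \<Rightarrow> 'v) \<Rightarrow> ('e \<Rightarrow> 'v) \<Rightarrow> 'v \<Rightarrow> 'v set \<Rightarrow> bool" where
  "communicated E src rng v C \<longleftrightarrow> (\<exists>w\<in>C. reach E src rng v w)"

end

theory Submission
  imports Defs "HOL-Real_Asymp.Real_Asymp"
begin

(*
  For a path mu the trace of <x_mu, x_mu> is the weight of its starting vertex, and it is 0
  otherwise, so the k-th sum is the sum over u of tau(p_u) times the number of walks of length k
  from u.  For u in a component C, walks staying in C are counted by the powers of the block G_C,
  which grow at most like a polynomial times lambda_C^k (Jordan form); a walk leaving C continues
  from a vertex that reaches strictly fewer vertices, so by induction the walks from u grow at most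
  like a polynomial times the largest lambda_C over the components reachable from u.  Conversely
  lambda_C^k is bounded by a row sum of the k-th power of G_C, and prefixing a fixed walk from a
  weighted vertex into C gives a matching lower bound infinitely often.  As nonzero sums are
  bounded below by the least positive weight, either the sums vanish eventually and every
  relevant lambda_C is 0, or the largest relevant lambda_C is at least 1 and the k-th roots of
  the sums have limsup equal to it.
*)

section \<open>Polynomial-exponential growth\<close>

definition poly_exp_bounded :: "real \<Rightarrow> (nat \<Rightarrow> real) \<Rightarrow> bool" where
  "poly_exp_bounded \<mu> g \<longleftrightarrow> (\<exists>c d. \<forall>k. \<bar>g k\<bar> \<le> c * (real k + 1) ^ d * \<mu> ^ k)"

lemma poly_exp_boundedI:
  assumes "\<And>k. \<bar>g k\<bar> \<le> c * (real k + 1) ^ d * \<mu> ^ k"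
  shows "poly_exp_bounded \<mu> g"
  using assms unfolding poly_exp_bounded_def by blast

lemma poly_exp_boundedE:
  assumes "poly_exp_bounded \<mu> g"
  obtains c d where "c \<ge> 0" "\<And>k. \<bar>g k\<bar> \<le> c * (real k + 1) ^ d * \<mu> ^ k"
proof -
  from assms obtain c d where cd: "\<And>k. \<bar>g k\<bar> \<le> c * (real k + 1) ^ d * \<mu> ^ k"
    unfolding poly_exp_bounded_def by blast
  have "c \<ge> 0" using cd[of 0] by simp
  then show thesis using cd by (rule that)
qed

lemma poly_exp_bounded_mono:
  assumes "\<And>k. \<bar>f k\<bar> \<le> \<bar>g k\<bar>" and "poly_exp_bounded \<mu> g"
  shows "poly_exp_bounded \<mu> f"
  using assms unfolding poly_exp_bounded_def by (meson order_trans)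

lemma poly_exp_bounded_zero [simp]: "poly_exp_bounded \<mu> (\<lambda>k. 0)"
  by (rule poly_exp_boundedI[of _ 0]) simp

lemma poly_exp_bounded_cmult:
  assumes "poly_exp_bounded \<mu> g"
  shows "poly_exp_bounded \<mu> (\<lambda>k. a * g k)"
proof -
  from assms obtain c d where cd: "\<And>k. \<bar>g k\<bar> \<le> c * (real k + 1) ^ d * \<mu> ^ k"
    unfolding poly_exp_bounded_def by blast
  show ?thesis
    by (rule poly_exp_boundedI[of _ "\<bar>a\<bar> * c" d])
       (use mult_left_mono[OF cd, of "\<bar>a\<bar>"] in \<open>simp add: abs_mult mult.assoc\<close>)
qed

lemma poly_exp_bounded_add:
  assumes "\<mu> > 0" and "poly_exp_bounded \<mu> f" and "poly_exp_bounded \<mu> g"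
  shows "poly_exp_bounded \<mu> (\<lambda>k. f k + g k)"
proof -
  from assms(2) obtain c1 d1 where "c1 \<ge> 0" and c1: "\<And>k. \<bar>f k\<bar> \<le> c1 * (real k + 1) ^ d1 * \<mu> ^ k"
    by (elim poly_exp_boundedE) blast
  from assms(3) obtain c2 d2 where "c2 \<ge> 0" and c2: "\<And>k. \<bar>g k\<bar> \<le> c2 * (real k + 1) ^ d2 * \<mu> ^ k"
    by (elim poly_exp_boundedE) blast
  have "\<bar>f k + g k\<bar> \<le> (c1 + c2) * (real k + 1) ^ (d1 + d2) * \<mu> ^ k" for k
  proof -
    have "c1 * (real k + 1) ^ d1 * \<mu> ^ k \<le> c1 * (real k + 1) ^ (d1 + d2) * \<mu> ^ k"
      and "c2 * (real k + 1) ^ d2 * \<mu> ^ k \<le> c2 * (real k + 1) ^ (d1 + d2) * \<mu> ^ k"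
      using \<open>c1 \<ge> 0\<close> \<open>c2 \<ge> 0\<close> \<open>\<mu> > 0\<close>
      by (intro mult_right_mono mult_left_mono power_increasing; simp)+
    then show ?thesis
      using c1[of k] c2[of k] abs_triangle_ineq[of "f k" "g k"] by (simp add: distrib_right)
  qed
  then show ?thesis by (rule poly_exp_boundedI)
qed

lemma poly_exp_bounded_sum:
  assumes "\<mu> > 0" and "\<And>x. x \<in> A \<Longrightarrow> poly_exp_bounded \<mu> (g x)"
  shows "poly_exp_bounded \<mu> (\<lambda>k. \<Sum>x\<in>A. g x k)"
  using assms(2)
proof (induction A rule: infinite_finite_induct)
  case (insert x F)
  then show ?case using poly_exp_bounded_add[OF assms(1), of "g x"] by simp
qed simp_all

lemma poly_exp_bounded_convolution:
  assumes "\<mu> > 0" and "poly_exp_bounded \<mu> f" and "poly_exp_bounded \<mu> g"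
  shows "poly_exp_bounded \<mu> (\<lambda>k. \<Sum>j<k. f (k - Suc j) * g j)"
proof -
  from assms(2) obtain c1 d1 where "c1 \<ge> 0" and c1: "\<And>k. \<bar>f k\<bar> \<le> c1 * (real k + 1) ^ d1 * \<mu> ^ k"
    by (elim poly_exp_boundedE) blast
  from assms(3) obtain c2 d2 where "c2 \<ge> 0" and c2: "\<And>k. \<bar>g k\<bar> \<le> c2 * (real k + 1) ^ d2 * \<mu> ^ k"
    by (elim poly_exp_boundedE) blast
  have widen: "c * (real i + 1) ^ d * \<mu> ^ i \<le> c * (real k + 1) ^ d * \<mu> ^ i"
    if "i \<le> k" "c \<ge> 0" for i k c d
    using that \<open>\<mu> > 0\<close> by (intro mult_right_mono mult_left_mono power_mono) auto
  let ?c = "c1 * c2 / \<mu>" and ?d = "d1 + d2"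
  have summand: "\<bar>f (k - Suc j) * g j\<bar> \<le> ?c * (real k + 1) ^ ?d * \<mu> ^ k" if "j < k" for j k
  proof -
    have "\<bar>f (k - Suc j) * g j\<bar>
        \<le> (c1 * (real k + 1) ^ d1 * \<mu> ^ (k - Suc j)) * (c2 * (real k + 1) ^ d2 * \<mu> ^ j)"
      unfolding abs_mult using \<open>c1 \<ge> 0\<close> \<open>c2 \<ge> 0\<close> that
      by (intro mult_mono' order_trans[OF c1 widen] order_trans[OF c2 widen]) simp_all
    also have "\<dots> = ?c * (real k + 1) ^ ?d * (\<mu> ^ (k - Suc j + j) * \<mu>)"
      using \<open>\<mu> > 0\<close> by (simp add: power_add field_simps)
    also have "\<mu> ^ (k - Suc j + j) * \<mu> = \<mu> ^ k"
      using that by (cases k) simp_all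
    finally show ?thesis .
  qed
  have "\<bar>\<Sum>j<k. f (k - Suc j) * g j\<bar> \<le> ?c * (real k + 1) ^ (?d + 1) * \<mu> ^ k" for k
  proof -
    have "\<bar>\<Sum>j<k. f (k - Suc j) * g j\<bar> \<le> (\<Sum>j<k. ?c * (real k + 1) ^ ?d * \<mu> ^ k)"
      by (rule order_trans[OF sum_abs sum_mono]) (use summand in simp)
    also have "\<dots> = real k * (?c * (real k + 1) ^ ?d * \<mu> ^ k)"
      by simp
    also have "\<dots> \<le> (real k + 1) * (?c * (real k + 1) ^ ?d * \<mu> ^ k)"
      using \<open>c1 \<ge> 0\<close> \<open>c2 \<ge> 0\<close> \<open>\<mu> > 0\<close> by (intro mult_right_mono) simp_all
    finally show ?thesis by (simp add: ac_simps)
  qed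
  then show ?thesis by (rule poly_exp_boundedI)
qed

lemma poly_exp_bounded_LIMSEQ_0:
  assumes "0 < \<mu>" "\<mu> < 1" and "poly_exp_bounded \<mu> g"
  shows "g \<longlonglongrightarrow> 0"
proof -
  from assms(3) obtain c d where cd: "\<And>k. \<bar>g k\<bar> \<le> c * (real k + 1) ^ d * \<mu> ^ k"
    by (elim poly_exp_boundedE) blast
  have "(\<lambda>k. (real k + 1) ^ d * \<mu> ^ k) \<longlonglongrightarrow> 0"
    using assms(1,2) by real_asymp
  then have "(\<lambda>k. c * ((real k + 1) ^ d * \<mu> ^ k)) \<longlonglongrightarrow> c * 0"
    by (rule tendsto_mult_left)
  then have bound_lim: "(\<lambda>k. c * (real k + 1) ^ d * \<mu> ^ k) \<longlonglongrightarrow> 0"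
    by (simp add: mult.assoc)
  have "(\<lambda>k. \<bar>g k\<bar>) \<longlonglongrightarrow> 0"
    by (rule tendsto_sandwich[OF _ _ tendsto_const bound_lim]) (simp_all add: cd)
  then show ?thesis by (simp add: tendsto_rabs_zero_iff)
qed

lemma limsup_log0_le:
  assumes "\<mu> \<ge> 1" and "\<And>k. g k \<ge> 0" and "poly_exp_bounded \<mu> g"
  shows "limsup (\<lambda>k. ereal (log0 (g k) / real k)) \<le> ereal (ln \<mu>)"
proof -
  from assms(3) obtain c d where cd: "\<And>k. \<bar>g k\<bar> \<le> c * (real k + 1) ^ d * \<mu> ^ k"
    by (elim poly_exp_boundedE) blast
  define c' where "c' = max 1 c"
  let ?h = "\<lambda>k. (ln c' + real d * ln (real k + 1)) / real k + ln \<mu>"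
  have "c' \<ge> 1" unfolding c'_def by simp
  have bound: "log0 (g k) / real k \<le> ?h k" for k
  proof (cases "k = 0 \<or> g k = 0")
    case True
    have "0 \<le> ?h k" using \<open>c' \<ge> 1\<close> \<open>\<mu> \<ge> 1\<close> by (intro add_nonneg_nonneg divide_nonneg_nonneg) auto
    then show ?thesis using True by (auto simp: log0_def)
  next
    case False
    then have "g k > 0" "k > 0" using assms(2)[of k] by auto
    have "g k \<le> c * (real k + 1) ^ d * \<mu> ^ k"
      using cd[of k] by simp
    also have "\<dots> \<le> c' * (real k + 1) ^ d * \<mu> ^ k"
      unfolding c'_def using \<open>\<mu> \<ge> 1\<close> by (intro mult_right_mono) auto
    finally have "ln (g k) \<le> ln (c' * (real k + 1) ^ d * \<mu> ^ k)"
      using \<open>g k > 0\<close> by simp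
    also have "\<dots> = ln c' + real d * ln (real k + 1) + real k * ln \<mu>"
      using \<open>c' \<ge> 1\<close> \<open>\<mu> \<ge> 1\<close> by (simp add: ln_mult ln_realpow)
    finally show ?thesis
      using \<open>g k > 0\<close> \<open>k > 0\<close> by (simp add: log0_def field_simps)
  qed
  have "?h \<longlonglongrightarrow> ln \<mu>" by real_asymp
  then have "limsup (\<lambda>k. ereal (?h k)) = ereal (ln \<mu>)"
    by (intro lim_imp_Limsup) simp_all
  moreover have "limsup (\<lambda>k. ereal (log0 (g k) / real k)) \<le> limsup (\<lambda>k. ereal (?h k))"
    by (intro Limsup_mono) (simp add: bound)
  ultimately show ?thesis by simp
qed

lemma limsup_log0_ge:
  assumes "c > 0" and "r > 0" and "\<And>N. \<exists>k\<ge>N. g k \<ge> c * r ^ k"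
  shows "ereal (ln r) \<le> limsup (\<lambda>k. ereal (log0 (g k) / real k))"
proof (rule ccontr)
  let ?X = "\<lambda>k. ereal (log0 (g k) / real k)"
  assume "\<not> ?thesis"
  then have "limsup ?X < ereal (ln r)" by simp
  then obtain z where "limsup ?X < ereal z" and "ereal z < ereal (ln r)"
    using ereal_dense2 by blast
  then have ev1: "\<forall>\<^sub>F k in sequentially. ?X k < ereal z"
    by (intro Limsup_lessD)
  have "(\<lambda>k. ln c / real k) \<longlonglongrightarrow> 0" by (rule lim_const_over_n)
  then have ev2: "\<forall>\<^sub>F k in sequentially. z - ln r < ln c / real k"
    using \<open>ereal z < ereal (ln r)\<close> by (intro order_tendstoD(1)) auto
  from eventually_conj[OF ev1 ev2] obtain N where
    N: "\<And>k. k \<ge> N \<Longrightarrow> ?X k < ereal z \<and> z - ln r < ln c / real k"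
    unfolding eventually_sequentially by blast
  obtain k where "k \<ge> max N 1" and gk: "g k \<ge> c * r ^ k"
    using assms(3) by blast
  then have "k > 0" by simp
  have "c * r ^ k > 0" using assms(1,2) by simp
  then have "g k > 0" using gk by linarith
  have "ln c + real k * ln r = ln (c * r ^ k)"
    using assms(1,2) by (simp add: ln_mult ln_realpow)
  also have "\<dots> \<le> ln (g k)"
    using gk \<open>c * r ^ k > 0\<close> by simp
  finally have "(ln c + real k * ln r) / real k \<le> ln (g k) / real k"
    using \<open>k > 0\<close> by (intro divide_right_mono) auto
  then have "ln c / real k + ln r \<le> log0 (g k) / real k"
    using \<open>k > 0\<close> \<open>g k > 0\<close> by (simp add: log0_def add_divide_distrib)
  with N[of k] \<open>k \<ge> max N 1\<close> show False by simp
qed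

lemma Max_log0_image:
  assumes "finite S" and "S \<noteq> {}" and "\<And>x. x \<in> S \<Longrightarrow> x \<ge> 0" and "Max S \<ge> 1"
  shows "Max (log0 ` S) = ln (Max S)"
proof (rule Max_eqI)
  show "ln (Max S) \<in> log0 ` S"
    using assms(1,2,4) Max_in[of S] by (force simp: log0_def)
next
  fix y assume "y \<in> log0 ` S"
  then obtain x where "x \<in> S" and y: "y = log0 x" by blast
  have "x \<le> Max S" using assms(1) \<open>x \<in> S\<close> by simp
  show "y \<le> ln (Max S)"
  proof (cases "x = 0")
    case False
    then have "x > 0" using assms(3)[OF \<open>x \<in> S\<close>] by simp
    then show ?thesis using \<open>x \<le> Max S\<close> unfolding y log0_def by simp
  qed (use assms(4) y in \<open>simp add: log0_def\<close>)
qed (use assms(1) in simp)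

section \<open>Spectral radius and growth of matrix powers\<close>

lemma pow_smult_mat:
  fixes A :: "'a::comm_ring_1 mat"
  assumes "A \<in> carrier_mat n n"
  shows "(c \<cdot>\<^sub>m A) ^\<^sub>m k = c ^ k \<cdot>\<^sub>m (A ^\<^sub>m k)"
proof (induction k)
  case (Suc k)
  have "(c \<cdot>\<^sub>m A) ^\<^sub>m Suc k = c ^ k \<cdot>\<^sub>m (A ^\<^sub>m k) * (c \<cdot>\<^sub>m A)" by (simp add: Suc)
  also have "\<dots> = c ^ Suc k \<cdot>\<^sub>m (A ^\<^sub>m Suc k)"
    using assms by (intro eq_matI) (auto simp: ac_simps)
  finally show ?case .
qed (use assms in auto)

lemma eigenvalue_smult_mat:
  fixes A :: "'a::field mat"
  assumes A: "A \<in> carrier_mat n n" and "c \<noteq> 0" and "eigenvalue (c \<cdot>\<^sub>m A) \<kappa>"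
  shows "eigenvalue A (\<kappa> / c)"
proof -
  from assms(3) obtain v where v: "v \<in> carrier_vec n" "v \<noteq> 0\<^sub>v n"
    and eq: "(c \<cdot>\<^sub>m A) *\<^sub>v v = \<kappa> \<cdot>\<^sub>v v"
    using A unfolding eigenvalue_def eigenvector_def by auto
  have "A *\<^sub>v v = (\<kappa> / c) \<cdot>\<^sub>v v"
  proof (rule eq_vecI)
    fix i assume "i < dim_vec ((\<kappa> / c) \<cdot>\<^sub>v v)"
    then have i: "i < n" using v by simp
    have "c * (A *\<^sub>v v) $ i = \<kappa> * v $ i"
      using arg_cong[OF eq, of "\<lambda>w. w $ i"] A v i by simp
    then have "(A *\<^sub>v v) $ i = \<kappa> * v $ i / c"
      using \<open>c \<noteq> 0\<close> by (simp add: eq_divide_eq mult.commute)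
    then show "(A *\<^sub>v v) $ i = ((\<kappa> / c) \<cdot>\<^sub>v v) $ i"
      using i v by simp
  qed (use A v in simp)
  then show ?thesis
    using A v unfolding eigenvalue_def eigenvector_def by auto
qed

lemma spectral_radius_smult_mat_le:
  assumes A: "A \<in> carrier_mat n n" and "n > 0" and "c \<noteq> 0"
  shows "spectral_radius (c \<cdot>\<^sub>m A) \<le> norm c * spectral_radius A"
proof -
  have cA: "c \<cdot>\<^sub>m A \<in> carrier_mat n n" using A by simp
  from spectral_radius_mem_max(1)[OF cA \<open>n > 0\<close>] obtain \<kappa> where
    "\<kappa> \<in> spectrum (c \<cdot>\<^sub>m A)" and \<kappa>: "spectral_radius (c \<cdot>\<^sub>m A) = norm \<kappa>" by auto
  then have "\<kappa> / c \<in> spectrum A"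
    using eigenvalue_smult_mat[OF A \<open>c \<noteq> 0\<close>] unfolding spectrum_def by simp
  then have "norm (\<kappa> / c) \<le> spectral_radius A"
    using spectral_radius_mem_max(2)[OF A \<open>n > 0\<close>] by auto
  then show ?thesis
    using \<open>c \<noteq> 0\<close> unfolding \<kappa> by (simp add: norm_divide field_simps)
qed

lemma spectral_radius_le_imp_pow_entries_bounded:
  assumes A: "A \<in> carrier_mat n n" and "spectral_radius A \<le> \<mu>" and "\<mu> > 0"
    and "i < n" and "j < n"
  shows "poly_exp_bounded \<mu> (\<lambda>k. norm ((A ^\<^sub>m k) $$ (i, j)))"
proof -
  let ?c = "complex_of_real (1 / \<mu>)"
  let ?B = "?c \<cdot>\<^sub>m A"
  have B: "?B \<in> carrier_mat n n" using A by simp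
  have "spectral_radius ?B \<le> 1 / \<mu> * spectral_radius A"
    using spectral_radius_smult_mat_le[OF A _, of ?c] \<open>i < n\<close> \<open>\<mu> > 0\<close> by (simp add: norm_divide)
  also have "\<dots> \<le> 1" using assms(2) \<open>\<mu> > 0\<close> by (simp add: field_simps)
  finally obtain c1 c2 where bound: "\<And>k. norm_bound (?B ^\<^sub>m k) (c1 + c2 * of_nat k ^ (n - 1))"
    using spectral_radius_jnf_norm_bound_le_1_upper_triangular[OF B] by blast
  have "norm ((A ^\<^sub>m k) $$ (i, j)) \<le> (\<bar>c1\<bar> + \<bar>c2\<bar>) * (real k + 1) ^ (n - 1) * \<mu> ^ k" for k
  proof -
    have "norm ((?B ^\<^sub>m k) $$ (i, j)) \<le> c1 + c2 * real k ^ (n - 1)"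
      using bound[of k] \<open>i < n\<close> \<open>j < n\<close> A unfolding norm_bound_def by auto
    also have "\<dots> \<le> (\<bar>c1\<bar> + \<bar>c2\<bar>) * (real k + 1) ^ (n - 1)"
    proof -
      let ?P = "(real k + 1) ^ (n - 1)"
      have "c1 \<le> \<bar>c1\<bar> * 1" by simp
      also have "\<dots> \<le> \<bar>c1\<bar> * ?P" by (intro mult_left_mono) simp_all
      finally have "c1 \<le> \<bar>c1\<bar> * ?P" .
      moreover have "c2 * real k ^ (n - 1) \<le> \<bar>c2\<bar> * real k ^ (n - 1)"
        by (intro mult_right_mono) simp_all
      moreover have "\<dots> \<le> \<bar>c2\<bar> * ?P"
        by (intro mult_left_mono power_mono) simp_all
      ultimately show ?thesis by (simp add: distrib_right)
    qed
    finally have "norm ((A ^\<^sub>m k) $$ (i, j)) / \<mu> ^ k \<le> (\<bar>c1\<bar> + \<bar>c2\<bar>) * (real k + 1) ^ (n - 1)"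
      using A \<open>i < n\<close> \<open>j < n\<close> \<open>\<mu> > 0\<close>
      by (simp add: pow_smult_mat[OF A] norm_mult norm_power norm_divide power_one_over)
    then show ?thesis using \<open>\<mu> > 0\<close> by (simp add: divide_le_eq)
  qed
  then show ?thesis by (intro poly_exp_boundedI) simp
qed

lemma spectral_radius_pow_le_row_sum:
  assumes A: "A \<in> carrier_mat n n" and "n > 0"
  shows "\<exists>i<n. spectral_radius A ^ k \<le> (\<Sum>j<n. norm ((A ^\<^sub>m k) $$ (i, j)))"
proof -
  from spectral_radius_mem_max(1)[OF A \<open>n > 0\<close>] obtain \<alpha> where
    "\<alpha> \<in> spectrum A" and \<alpha>: "spectral_radius A = norm \<alpha>" by auto
  then obtain v where ev: "eigenvector A v \<alpha>"
    unfolding spectrum_def eigenvalue_def by auto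
  then have v: "v \<in> carrier_vec n" "v \<noteq> 0\<^sub>v n"
    using A unfolding eigenvector_def by auto
  \<comment> \<open>Evaluate the eigenvalue equation for \<open>A ^ k\<close> at an entry of \<open>v\<close> of maximal modulus.\<close>
  have "Max ((\<lambda>j. norm (v $ j)) ` {..<n}) \<in> (\<lambda>j. norm (v $ j)) ` {..<n}"
    using \<open>n > 0\<close> by (intro Max_in) auto
  then obtain i where "i < n" and i: "Max ((\<lambda>j. norm (v $ j)) ` {..<n}) = norm (v $ i)"
    by auto
  have imax: "norm (v $ j) \<le> norm (v $ i)" if "j < n" for j
    unfolding i[symmetric] using that by (intro Max_ge) auto
  have "\<exists>j<n. v $ j \<noteq> 0"
  proof (rule ccontr)
    assume "\<not> ?thesis"
    then have "v = 0\<^sub>v n" using v(1) by (intro eq_vecI) auto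
    with v(2) show False by simp
  qed
  then obtain j0 where "j0 < n" and "v $ j0 \<noteq> 0" by blast
  then have "norm (v $ i) > 0" using imax[of j0] by auto
  have "\<alpha> ^ k * v $ i = (\<Sum>j<n. (A ^\<^sub>m k) $$ (i, j) * v $ j)"
    using arg_cong[OF eigenvector_pow[OF A ev, of k], of "\<lambda>w. w $ i"] A v \<open>i < n\<close>
    by (simp add: scalar_prod_def lessThan_atLeast0)
  then have "norm \<alpha> ^ k * norm (v $ i) = norm (\<Sum>j<n. (A ^\<^sub>m k) $$ (i, j) * v $ j)"
    by (metis norm_mult norm_power)
  also have "\<dots> \<le> (\<Sum>j<n. norm ((A ^\<^sub>m k) $$ (i, j)) * norm (v $ j))"
    by (rule order_trans[OF norm_sum]) (simp add: norm_mult)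
  also have "\<dots> \<le> (\<Sum>j<n. norm ((A ^\<^sub>m k) $$ (i, j))) * norm (v $ i)"
    unfolding sum_distrib_right by (intro sum_mono mult_left_mono imax) auto
  finally show ?thesis
    using \<open>i < n\<close> \<open>norm (v $ i) > 0\<close> unfolding \<alpha> by auto
qed

section \<open>Walks in a finite graph\<close>

locale finite_graph =
  fixes E :: "'e::finite set" and src rng :: "'e \<Rightarrow> 'v::finite"
begin

abbreviation reaches :: "'v \<Rightarrow> 'v \<Rightarrow> bool" where
  "reaches \<equiv> reach E src rng"

abbreviation edge_count :: "'v \<Rightarrow> 'v \<Rightarrow> nat" where
  "edge_count \<equiv> adj E src rng"

fun chained :: "'e list \<Rightarrow> bool" where
  "chained [] = True"
| "chained [e] = True"
| "chained (e # f # nu) = (src e = rng f \<and> chained (f # nu))"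

text \<open>Words are read from right to left: a walk starts at the source of its last edge
  and ends at the range of its first one.\<close>
definition is_walk :: "'e list \<Rightarrow> 'v \<Rightarrow> 'v \<Rightarrow> bool" where
  "is_walk mu u w \<longleftrightarrow>
     (if mu = [] then u = w else chained mu \<and> src (last mu) = u \<and> rng (hd mu) = w)"

lemma is_walk_Cons: "is_walk (e # nu) u w \<longleftrightarrow> rng e = w \<and> is_walk nu u (src e)"
  by (cases nu) (auto simp: is_walk_def)

lemma xinner_eq:
  "xinner src rng mu = (if mu = [] then (\<lambda>_. 1) else if chained mu then proj (src (last mu)) else (\<lambda>_. 0))"
  by (induction mu rule: chained.induct) (auto simp: proj_def)

lemma xinner_eq_sum_is_walk: "xinner src rng mu u = (\<Sum>w\<in>UNIV. if is_walk mu u w then 1 else 0)"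
proof (cases "mu = [] \<or> chained mu \<and> src (last mu) = u")
  case False
  then have "\<not> is_walk mu u w" for w by (auto simp: is_walk_def)
  with False show ?thesis by (auto simp: xinner_eq proj_def)
qed (auto simp: xinner_eq proj_def is_walk_def)

fun walks :: "nat \<Rightarrow> 'v \<Rightarrow> 'v \<Rightarrow> nat" where
  "walks 0 u w = (if u = w then 1 else 0)"
| "walks (Suc k) u w = (\<Sum>v\<in>UNIV. walks k u v * edge_count v w)"

lemma card_walks: "card {mu. length mu = k \<and> set mu \<subseteq> E \<and> is_walk mu u w} = walks k u w"
proof (induction k arbitrary: w)
  case 0
  then show ?case by (auto simp: is_walk_def)
next
  case (Suc k)
  let ?L = "\<lambda>v. {mu. length mu = k \<and> set mu \<subseteq> E \<and> is_walk mu u v}"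
  have fin: "finite (?L v)" for v
    by (rule finite_subset[OF _ finite_lists_length_eq[OF finite[of E], of k]]) auto
  have "{mu. length mu = Suc k \<and> set mu \<subseteq> E \<and> is_walk mu u w}
      = (\<lambda>(e, nu). e # nu) ` (SIGMA e:{e\<in>E. rng e = w}. ?L (src e))"
    by (auto simp: length_Suc_conv is_walk_Cons)
  then have "card {mu. length mu = Suc k \<and> set mu \<subseteq> E \<and> is_walk mu u w}
      = card (SIGMA e:{e\<in>E. rng e = w}. ?L (src e))"
    by (simp add: card_image inj_on_def)
  also have "\<dots> = (\<Sum>e\<in>{e\<in>E. rng e = w}. walks k u (src e))"
    using fin by (simp add: Suc.IH)
  also have "\<dots> = (\<Sum>v\<in>UNIV. \<Sum>e\<in>{x \<in> {e\<in>E. rng e = w}. src x = v}. walks k u (src e))"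
    by (rule sum.group[symmetric]) auto
  also have "\<dots> = (\<Sum>v\<in>UNIV. walks k u v * edge_count v w)"
  proof (intro sum.cong refl)
    fix v
    have "(\<Sum>e\<in>{x \<in> {e\<in>E. rng e = w}. src x = v}. walks k u (src e))
        = (\<Sum>e\<in>{e\<in>E. src e = v \<and> rng e = w}. walks k u v)"
      by (rule sum.cong) auto
    then show "(\<Sum>e\<in>{x \<in> {e\<in>E. rng e = w}. src x = v}. walks k u (src e))
        = walks k u v * edge_count v w"
      by (simp add: adj_def) blast
  qed
  finally show ?case by simp
qed

definition walks_from :: "nat \<Rightarrow> 'v \<Rightarrow> real" where
  "walks_from k u = (\<Sum>w\<in>UNIV. real (walks k u w))"

lemma path_sum_eq: "path_sum E src rng t k = (\<Sum>u\<in>UNIV. t u * walks_from k u)"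
proof -
  let ?L = "{mu :: 'e list. length mu = k \<and> set mu \<subseteq> E}"
  have fin: "finite ?L"
    by (rule finite_subset[OF _ finite_lists_length_eq[OF finite[of E], of k]]) auto
  have count: "(\<Sum>mu\<in>?L. if is_walk mu u w then 1 else 0) = real (walks k u w)" for u w
    using sum.inter_filter[OF fin, of "\<lambda>_. 1::real" "\<lambda>mu. is_walk mu u w"]
    by (simp add: card_walks[symmetric] conj_assoc)
  have "path_sum E src rng t k
      = (\<Sum>mu\<in>?L. \<Sum>u\<in>UNIV. t u * (\<Sum>w\<in>UNIV. if is_walk mu u w then 1 else 0))"
    by (simp add: path_sum_def trace_st_def xinner_eq_sum_is_walk)
  also have "\<dots> = (\<Sum>u\<in>UNIV. t u * (\<Sum>w\<in>UNIV. \<Sum>mu\<in>?L. if is_walk mu u w then 1 else 0))"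
    by (subst sum.swap) (simp add: sum_distrib_left sum.swap[of _ ?L])
  finally show ?thesis by (simp add: count walks_from_def)
qed

lemma edge_count_pos_iff: "edge_count v w > 0 \<longleftrightarrow> (\<exists>e\<in>E. src e = v \<and> rng e = w)"
  unfolding adj_def by (auto simp: card_gt_0_iff)

lemma reaches_refl [simp]: "reaches u u"
  unfolding reach_def by simp

lemma reaches_trans: "reaches u v \<Longrightarrow> reaches v w \<Longrightarrow> reaches u w"
  unfolding reach_def by (rule rtrancl_trans)

lemma edge_count_pos_imp_reaches: "edge_count v w > 0 \<Longrightarrow> reaches v w"
  unfolding edge_count_pos_iff reach_def by blast

lemma walks_pos_imp_reaches: "walks k u v > 0 \<Longrightarrow> reaches u v"
proof (induction k arbitrary: v)
  case (Suc k v)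
  from Suc.prems have "(\<Sum>y\<in>UNIV. walks k u y * edge_count y v) \<noteq> 0"
    unfolding walks.simps by (rule gr_implies_not0)
  then obtain y where "walks k u y * edge_count y v \<noteq> 0"
    using sum.not_neutral_contains_not_neutral by blast
  then have "walks k u y > 0" and "edge_count y v > 0" by auto
  then show ?case
    using Suc.IH edge_count_pos_imp_reaches reaches_trans by blast
qed (simp split: if_splits)

lemma walks_Suc_ge: "walks k u y * edge_count y w \<le> walks (Suc k) u w"
  unfolding walks.simps by (rule member_le_sum) auto

lemma reaches_imp_walks_pos: "reaches u v \<Longrightarrow> \<exists>k. walks k u v > 0"
  unfolding reach_def
proof (induction rule: rtrancl_induct)
  case base
  have "walks 0 u u > 0" by simp
  then show ?case by blast
next
  case (step y z)
  then obtain k where "walks k u y > 0" by blast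
  moreover from step(2) have "edge_count y z > 0" by (auto simp: edge_count_pos_iff)
  ultimately have "walks k u y * edge_count y z > 0" by simp
  then have "walks (Suc k) u z > 0"
    using walks_Suc_ge[of k u y z] by linarith
  then show ?case by blast
qed

lemma walks_add: "walks (a + b) u w = (\<Sum>v\<in>UNIV. walks a u v * walks b v w)"
proof (induction b arbitrary: w)
  case 0
  have "(\<Sum>v\<in>UNIV. walks a u v * walks 0 v w) = (\<Sum>v\<in>UNIV. if v = w then walks a u w else 0)"
    by (intro sum.cong) auto
  then show ?case by simp
next
  case (Suc b)
  have "walks (a + Suc b) u w = (\<Sum>y\<in>UNIV. \<Sum>v\<in>UNIV. walks a u v * walks b v y * edge_count y w)"
    by (simp add: Suc.IH sum_distrib_right)
  also have "\<dots> = (\<Sum>v\<in>UNIV. walks a u v * walks (Suc b) v w)"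
    by (subst sum.swap) (simp add: sum_distrib_left mult.assoc)
  finally show ?case .
qed

lemma walks_Suc_left: "walks (Suc k) u w = (\<Sum>y\<in>UNIV. edge_count u y * walks k y w)"
proof -
  have "walks 1 u y = edge_count u y" for y
  proof -
    have "(\<Sum>v\<in>UNIV. walks 0 u v * edge_count v y) = (\<Sum>v\<in>UNIV. if v = u then edge_count u y else 0)"
      by (intro sum.cong) auto
    then show ?thesis by simp
  qed
  then show ?thesis using walks_add[of 1 k u w] by simp
qed

lemma component_in_components: "{w. reaches u w \<and> reaches w u} \<in> components E src rng"
  unfolding components_def by blast

lemma component_convex:
  assumes "C \<in> components E src rng" and "a \<in> C" and "b \<in> C"
    and "reaches a v" and "reaches v b"
  shows "v \<in> C"
  using assms reaches_trans unfolding components_def by blast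

lemma component_nonempty: "C \<in> components E src rng \<Longrightarrow> C \<noteq> {}"
  unfolding components_def by auto

definition block_index :: "'v set \<Rightarrow> nat \<Rightarrow> 'v" where
  "block_index C = (SOME f. bij_betw f {..<card C} C)"

lemma bij_block_index: "bij_betw (block_index C) {..<card C} C"
proof -
  have "\<exists>f. bij_betw f {..<card C} C"
    using ex_bij_betw_nat_finite[of C] by (simp add: atLeast0LessThan)
  then show ?thesis unfolding block_index_def by (rule someI_ex)
qed

lemma block_mat_eq:
  "block_mat E src rng C
     = mat (card C) (card C) (\<lambda>(i, j). of_nat (edge_count (block_index C i) (block_index C j)))"
  unfolding block_mat_def block_index_def Let_def ..

lemma block_mat_carrier: "block_mat E src rng C \<in> carrier_mat (card C) (card C)"
  unfolding block_mat_eq by simp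

lemma block_mat_entry:
  "i < card C \<Longrightarrow> j < card C \<Longrightarrow>
   block_mat E src rng C $$ (i, j) = of_nat (edge_count (block_index C i) (block_index C j))"
  unfolding block_mat_eq by simp

text \<open>Walks between two vertices of a component never leave it, so they are counted by the
  powers of the diagonal block.\<close>
lemma block_mat_pow_entry:
  assumes C: "C \<in> components E src rng" and i: "i < card C" and "j < card C"
  shows "(block_mat E src rng C ^\<^sub>m k) $$ (i, j) = of_nat (walks k (block_index C i) (block_index C j))"
  using \<open>j < card C\<close>
proof (induction k arbitrary: j)
  case (0 j)
  have "block_index C i = block_index C j \<longleftrightarrow> i = j"
    using inj_on_eq_iff[OF bij_betw_imp_inj_on[OF bij_block_index[of C]]] i 0 by simp
  then show ?case using i 0 by (simp add: block_mat_carrier[THEN carrier_matD(1)])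
next
  case (Suc k j)
  let ?f = "block_index C" and ?n = "card C" and ?A = "block_mat E src rng C"
  have "(?A ^\<^sub>m Suc k) $$ (i, j) = (\<Sum>l<?n. (?A ^\<^sub>m k) $$ (i, l) * ?A $$ (l, j))"
    using block_mat_carrier[of C] i Suc.prems by (simp add: scalar_prod_def atLeast0LessThan)
  also have "\<dots> = (\<Sum>l<?n. of_nat (walks k (?f i) (?f l) * edge_count (?f l) (?f j)))"
    by (intro sum.cong refl) (simp add: Suc.IH Suc.prems block_mat_entry)
  also have "\<dots> = of_nat (\<Sum>l<?n. walks k (?f i) (?f l) * edge_count (?f l) (?f j))"
    by simp
  also have "(\<Sum>l<?n. walks k (?f i) (?f l) * edge_count (?f l) (?f j))
      = (\<Sum>v\<in>C. walks k (?f i) v * edge_count v (?f j))"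
    by (rule sum.reindex_bij_betw[OF bij_block_index[of C]])
  also have "\<dots> = (\<Sum>v\<in>UNIV. walks k (?f i) v * edge_count v (?f j))"
  proof (rule sum.mono_neutral_left)
    have "?f i \<in> C" "?f j \<in> C" using bij_betwE[OF bij_block_index[of C]] i Suc.prems by auto
    show "\<forall>v\<in>UNIV - C. walks k (?f i) v * edge_count v (?f j) = 0"
    proof
      fix v assume "v \<in> UNIV - C"
      show "walks k (?f i) v * edge_count v (?f j) = 0"
      proof (rule ccontr)
        assume "walks k (?f i) v * edge_count v (?f j) \<noteq> 0"
        then have "reaches (?f i) v" and "reaches v (?f j)"
          using walks_pos_imp_reaches edge_count_pos_imp_reaches by auto
        with \<open>?f i \<in> C\<close> \<open>?f j \<in> C\<close> have "v \<in> C" by (rule component_convex[OF C])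
        with \<open>v \<in> UNIV - C\<close> show False by simp
      qed
    qed
  qed simp_all
  finally show ?case by simp
qed

lemma lambda_comp_pow_le_walks:
  assumes C: "C \<in> components E src rng"
  shows "\<exists>a\<in>C. lambda_comp E src rng C ^ k \<le> (\<Sum>b\<in>C. real (walks k a b))"
proof -
  have "card C > 0" using component_nonempty[OF C] by (simp add: card_gt_0_iff)
  from spectral_radius_pow_le_row_sum[OF block_mat_carrier this]
  obtain i where i: "i < card C" and
    "lambda_comp E src rng C ^ k \<le> (\<Sum>j<card C. norm ((block_mat E src rng C ^\<^sub>m k) $$ (i, j)))"
    unfolding lambda_comp_def by blast
  moreover have "\<dots> = (\<Sum>j<card C. real (walks k (block_index C i) (block_index C j)))"
    by (intro sum.cong refl) (simp add: block_mat_pow_entry[OF C i])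
  moreover have "\<dots> = (\<Sum>b\<in>C. real (walks k (block_index C i) b))"
    by (rule sum.reindex_bij_betw[OF bij_block_index[of C]])
  moreover have "block_index C i \<in> C"
    using bij_betwE[OF bij_block_index[of C]] i by blast
  ultimately show ?thesis by auto
qed

lemma walks_in_component_poly_exp_bounded:
  assumes C: "C \<in> components E src rng" and "lambda_comp E src rng C \<le> \<mu>" and "\<mu> > 0"
    and "a \<in> C" and "b \<in> C"
  shows "poly_exp_bounded \<mu> (\<lambda>k. real (walks k a b))"
proof -
  have "block_index C ` {..<card C} = C"
    by (rule bij_betw_imp_surj_on[OF bij_block_index])
  then obtain i j where "i < card C" "a = block_index C i" "j < card C" "b = block_index C j"
    using \<open>a \<in> C\<close> \<open>b \<in> C\<close> by (metis imageE lessThan_iff)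
  with spectral_radius_le_imp_pow_entries_bounded[OF block_mat_carrier, of C \<mu> i j] assms(2,3)
  show ?thesis by (simp add: lambda_comp_def block_mat_pow_entry[OF C])
qed

lemma walks_from_nonneg: "walks_from k u \<ge> 0"
  unfolding walks_from_def by (simp add: sum_nonneg)

lemma walks_from_Suc: "walks_from (Suc k) a = (\<Sum>y\<in>UNIV. real (edge_count a y) * walks_from k y)"
  unfolding walks_from_def walks_Suc_left of_nat_sum of_nat_mult sum_distrib_left
  by (rule sum.swap)

lemma sum_walks_within_le:
  "(\<Sum>y\<in>C. real (edge_count a y) * real (walks m y b)) \<le> real (walks (Suc m) a b)"
  unfolding walks_Suc_left of_nat_sum of_nat_mult by (rule sum_mono2) auto

lemma sum_walks_within_weighted_le:
  assumes "\<And>b. f b \<ge> 0"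
  shows "(\<Sum>y\<in>C. \<Sum>b\<in>C. real (edge_count a y) * (real (walks m y b) * f b))
    \<le> (\<Sum>b\<in>C. real (walks (Suc m) a b) * f b)"
proof -
  have "(\<Sum>y\<in>C. \<Sum>b\<in>C. real (edge_count a y) * (real (walks m y b) * f b))
      = (\<Sum>b\<in>C. (\<Sum>y\<in>C. real (edge_count a y) * real (walks m y b)) * f b)"
    unfolding sum_distrib_right mult.assoc by (rule sum.swap)
  also have "\<dots> \<le> (\<Sum>b\<in>C. real (walks (Suc m) a b) * f b)"
    by (intro sum_mono mult_right_mono sum_walks_within_le assms)
  finally show ?thesis .
qed

definition leaving_walks :: "'v set \<Rightarrow> nat \<Rightarrow> 'v \<Rightarrow> real" where
  "leaving_walks C j b = (\<Sum>y\<in>-C. real (edge_count b y) * walks_from j y)"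

lemma leaving_walks_nonneg: "leaving_walks C j b \<ge> 0"
  unfolding leaving_walks_def by (simp add: sum_nonneg walks_from_nonneg)

text \<open>A walk from \<open>a\<close> either stays in \<open>C\<close>, or it runs inside \<open>C\<close> to some \<open>b\<close>, takes
  an edge leaving \<open>C\<close> and then continues arbitrarily for \<open>j\<close> more steps.\<close>
lemma walks_from_le_first_exit:
  assumes "a \<in> C"
  shows "walks_from k a \<le> (\<Sum>b\<in>C. real (walks k a b))
           + (\<Sum>j<k. \<Sum>b\<in>C. real (walks (k - Suc j) a b) * leaving_walks C j b)"
  using assms
proof (induction k arbitrary: a)
  case 0
  have "walks_from 0 a = 1" and "(\<Sum>b\<in>C. real (walks 0 a b)) = 1"
    using 0 by (simp_all add: walks_from_def of_nat_eq_1_iff if_distrib cong: if_cong)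
  then show ?case by simp
next
  case (Suc k a)
  let ?e = "\<lambda>y. real (edge_count a y)" and ?L = "leaving_walks C"
  have split: "walks_from (Suc k) a = (\<Sum>y\<in>C. ?e y * walks_from k y) + ?L k a"
    unfolding walks_from_Suc leaving_walks_def
    using sum.subset_diff[of C UNIV "\<lambda>y. ?e y * walks_from k y"] by (simp add: Compl_eq_Diff_UNIV)
  have "(\<Sum>y\<in>C. ?e y * walks_from k y)
      \<le> (\<Sum>y\<in>C. ?e y * ((\<Sum>b\<in>C. real (walks k y b) * 1)
            + (\<Sum>j<k. \<Sum>b\<in>C. real (walks (k - Suc j) y b) * ?L j b)))"
    using Suc.IH by (intro sum_mono mult_left_mono) auto
  also have "\<dots> = (\<Sum>y\<in>C. \<Sum>b\<in>C. ?e y * (real (walks k y b) * 1))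
      + (\<Sum>j<k. \<Sum>y\<in>C. \<Sum>b\<in>C. ?e y * (real (walks (k - Suc j) y b) * ?L j b))"
    by (simp only: distrib_left sum.distrib sum_distrib_left
        sum.swap[of "\<lambda>y j. \<Sum>b\<in>C. ?e y * (real (walks (k - Suc j) y b) * ?L j b)" "{..<k}" C])
  also have "\<dots> \<le> (\<Sum>b\<in>C. real (walks (Suc k) a b) * 1)
      + (\<Sum>j<k. \<Sum>b\<in>C. real (walks (Suc (k - Suc j)) a b) * ?L j b)"
    by (intro add_mono sum_mono sum_walks_within_weighted_le leaving_walks_nonneg) simp
  also have "(\<Sum>j<k. \<Sum>b\<in>C. real (walks (Suc (k - Suc j)) a b) * ?L j b)
      = (\<Sum>j<k. \<Sum>b\<in>C. real (walks (Suc k - Suc j) a b) * ?L j b)"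
    by (intro sum.cong refl) (simp add: Suc_diff_Suc)
  finally have within: "(\<Sum>y\<in>C. ?e y * walks_from k y) \<le> (\<Sum>b\<in>C. real (walks (Suc k) a b) * 1)
      + (\<Sum>j<k. \<Sum>b\<in>C. real (walks (Suc k - Suc j) a b) * ?L j b)" .
  have "(\<Sum>b\<in>C. real (walks (Suc k - Suc k) a b) * ?L k b) = (\<Sum>b\<in>C. if a = b then ?L k b else 0)"
    by (intro sum.cong) auto
  also have "\<dots> = ?L k a" using Suc.prems by simp
  finally show ?case using split within by (simp add: add.assoc)
qed

lemma walks_from_poly_exp_bounded:
  assumes "\<mu> > 0"
    and "\<And>C. C \<in> components E src rng \<Longrightarrow> communicated E src rng u C \<Longrightarrow> lambda_comp E src rng C \<le> \<mu>"
  shows "poly_exp_bounded \<mu> (\<lambda>k. walks_from k u)"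
  using assms(2)
proof (induction "card {w. reaches u w}" arbitrary: u rule: less_induct)
  case less
  define C where "C = {w. reaches u w \<and> reaches w u}"
  have C: "C \<in> components E src rng" unfolding C_def by (rule component_in_components)
  have "u \<in> C" by (simp add: C_def)
  have "lambda_comp E src rng C \<le> \<mu>"
    using less.prems[OF C] \<open>u \<in> C\<close> reaches_refl unfolding communicated_def by blast
  then have inside: "poly_exp_bounded \<mu> (\<lambda>k. real (walks k u b))" if "b \<in> C" for b
    using walks_in_component_poly_exp_bounded[OF C _ assms(1) \<open>u \<in> C\<close> that] by blast
  \<comment> \<open>A vertex entered on leaving \<open>C\<close> reaches strictly fewer vertices than \<open>u\<close>.\<close>
  have leaving: "poly_exp_bounded \<mu> (\<lambda>j. leaving_walks C j b)" if "b \<in> C" for b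
    unfolding leaving_walks_def
  proof (rule poly_exp_bounded_sum[OF assms(1)])
    fix y assume "y \<in> - C"
    show "poly_exp_bounded \<mu> (\<lambda>j. real (edge_count b y) * walks_from j y)"
    proof (cases "edge_count b y = 0")
      case False
      then have "reaches u y"
        using \<open>b \<in> C\<close> edge_count_pos_imp_reaches reaches_trans unfolding C_def by blast
      moreover have "\<not> reaches y u" using \<open>reaches u y\<close> \<open>y \<in> - C\<close> unfolding C_def by blast
      ultimately have "{w. reaches y w} \<subset> {w. reaches u w}"
        using reaches_trans reaches_refl by blast
      then have "card {w. reaches y w} < card {w. reaches u w}"
        by (rule psubset_card_mono[rotated]) simp
      moreover have "lambda_comp E src rng C' \<le> \<mu>"
        if "C' \<in> components E src rng" "communicated E src rng y C'" for C'
        using less.prems that \<open>reaches u y\<close> reaches_trans unfolding communicated_def by blast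
      ultimately show ?thesis
        by (intro poly_exp_bounded_cmult less.hyps) blast+
    qed simp
  qed
  have "poly_exp_bounded \<mu> (\<lambda>k. (\<Sum>b\<in>C. real (walks k u b))
      + (\<Sum>b\<in>C. \<Sum>j<k. real (walks (k - Suc j) u b) * leaving_walks C j b))"
    by (intro poly_exp_bounded_add poly_exp_bounded_sum poly_exp_bounded_convolution assms(1)
        inside leaving)
  then show ?case
  proof (rule poly_exp_bounded_mono[rotated])
    show "\<bar>walks_from k u\<bar> \<le> \<bar>(\<Sum>b\<in>C. real (walks k u b))
        + (\<Sum>b\<in>C. \<Sum>j<k. real (walks (k - Suc j) u b) * leaving_walks C j b)\<bar>" for k
      using walks_from_le_first_exit[OF \<open>u \<in> C\<close>, of k] walks_from_nonneg[of k u]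
        sum.swap[of "\<lambda>j b. real (walks (k - Suc j) u b) * leaving_walks C j b" C "{..<k}"]
      by simp
  qed
qed

subsection \<open>Growth of the path sums\<close>

definition relevant_components :: "('v \<Rightarrow> real) \<Rightarrow> 'v set set" where
  "relevant_components t =
     {C \<in> components E src rng. \<exists>v. t v \<noteq> 0 \<and> communicated E src rng v C}"

lemma finite_relevant_components: "finite (relevant_components t)"
  unfolding relevant_components_def components_def by simp

lemma relevant_components_nonempty:
  assumes "tracial_vec t"
  shows "relevant_components t \<noteq> {}"
proof -
  have "\<exists>u. t u \<noteq> 0"
  proof (rule ccontr)
    assume "\<not> ?thesis"
    then have "(\<Sum>v\<in>UNIV. t v) = 0" by simp
    with assms show False unfolding tracial_vec_def by simp
  qed
  then obtain u where "t u \<noteq> 0" by blast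
  then have "{w. reaches u w \<and> reaches w u} \<in> relevant_components t"
    using component_in_components reaches_refl
    unfolding relevant_components_def communicated_def by blast
  then show ?thesis by blast
qed

lemma lambda_comp_nonneg:
  assumes "C \<in> components E src rng"
  shows "lambda_comp E src rng C \<ge> 0"
proof -
  have "card C > 0" using component_nonempty[OF assms] by (simp add: card_gt_0_iff)
  from spectral_radius_mem_max(1)[OF block_mat_carrier this] show ?thesis
    unfolding lambda_comp_def by auto
qed

lemma walks_mult_le_walks_add: "walks i u v * walks j v w \<le> walks (i + j) u w"
  unfolding walks_add by (rule member_le_sum) auto

lemma path_sum_ge_term:
  assumes "tracial_vec t"
  shows "t u * walks_from k u \<le> path_sum E src rng t k"
  unfolding path_sum_eq using assms
  by (intro member_le_sum mult_nonneg_nonneg walks_from_nonneg) (auto simp: tracial_vec_def)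

lemma path_sum_nonneg: "tracial_vec t \<Longrightarrow> path_sum E src rng t k \<ge> 0"
  unfolding path_sum_eq tracial_vec_def by (intro sum_nonneg mult_nonneg_nonneg walks_from_nonneg) auto

text \<open>Path counts are integers, so a nonzero path sum is at least one of the weights.\<close>
lemma path_sum_ge_weight:
  assumes "tracial_vec t" and "path_sum E src rng t k \<noteq> 0"
  shows "\<exists>u. t u \<noteq> 0 \<and> t u \<le> path_sum E src rng t k"
proof -
  from assms(2) obtain u where u: "t u * walks_from k u \<noteq> 0"
    unfolding path_sum_eq using sum.not_neutral_contains_not_neutral by blast
  then have "walks_from k u \<noteq> 0" by simp
  then obtain w where "real (walks k u w) \<noteq> 0"
    unfolding walks_from_def using sum.not_neutral_contains_not_neutral by blast
  then have "1 \<le> real (walks k u w)" by simp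
  also have "\<dots> \<le> walks_from k u"
    unfolding walks_from_def by (rule member_le_sum) auto
  finally have "walks_from k u \<ge> 1" .
  moreover have "t u \<ge> 0" using assms(1) unfolding tracial_vec_def by blast
  ultimately have "t u \<le> t u * walks_from k u" by (simp add: mult_le_cancel_left1)
  with u path_sum_ge_term[OF assms(1), of u k] show ?thesis by fastforce
qed

lemma path_sum_poly_exp_bounded:
  assumes "\<mu> > 0" and "\<And>C. C \<in> relevant_components t \<Longrightarrow> lambda_comp E src rng C \<le> \<mu>"
  shows "poly_exp_bounded \<mu> (path_sum E src rng t)"
proof -
  have "poly_exp_bounded \<mu> (\<lambda>k. \<Sum>u\<in>UNIV. t u * walks_from k u)"
  proof (rule poly_exp_bounded_sum[OF assms(1)])
    fix u
    show "poly_exp_bounded \<mu> (\<lambda>k. t u * walks_from k u)"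
    proof (cases "t u = 0")
      case False
      then have "poly_exp_bounded \<mu> (\<lambda>k. walks_from k u)"
        using assms by (intro walks_from_poly_exp_bounded) (auto simp: relevant_components_def)
      then show ?thesis by (rule poly_exp_bounded_cmult)
    qed simp
  qed
  moreover have "path_sum E src rng t = (\<lambda>k. \<Sum>u\<in>UNIV. t u * walks_from k u)"
    using path_sum_eq by blast
  ultimately show ?thesis by simp
qed

text \<open>Prefixing a fixed walk from \<open>u\<close> into \<open>C\<close> turns the row-sum estimate for the block
  of \<open>C\<close> into a lower bound for the walks from \<open>u\<close>, with a bounded loss in the length.\<close>
lemma walks_from_ge_lambda_pow:
  assumes C: "C \<in> components E src rng" and "communicated E src rng u C"
  obtains D where "\<And>N. \<exists>d\<le>D. lambda_comp E src rng C ^ N \<le> walks_from (d + N) u"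
proof -
  obtain w where "w \<in> C" and "reaches u w"
    using assms(2) unfolding communicated_def by blast
  have reach_C: "reaches u a" if "a \<in> C" for a
    using \<open>reaches u w\<close> C \<open>w \<in> C\<close> that reaches_trans unfolding components_def by blast
  define d where "d a = (SOME d. walks d u a > 0)" for a
  have d: "walks (d a) u a > 0" if "a \<in> C" for a
    unfolding d_def by (rule someI_ex[OF reaches_imp_walks_pos]) (rule reach_C[OF that])
  have "\<exists>d'\<le>Max (d ` C). lambda_comp E src rng C ^ N \<le> walks_from (d' + N) u" for N
  proof -
    obtain a where "a \<in> C" and a: "lambda_comp E src rng C ^ N \<le> (\<Sum>b\<in>C. real (walks N a b))"
      using lambda_comp_pow_le_walks[OF C] by blast
    note a
    also have "\<dots> \<le> (\<Sum>b\<in>C. real (walks (d a + N) u b))"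
    proof (rule sum_mono)
      fix b
      have "walks N a b \<le> walks (d a) u a * walks N a b" using d[OF \<open>a \<in> C\<close>] by simp
      also have "\<dots> \<le> walks (d a + N) u b" by (rule walks_mult_le_walks_add)
      finally show "real (walks N a b) \<le> real (walks (d a + N) u b)" by simp
    qed
    also have "\<dots> \<le> walks_from (d a + N) u"
      unfolding walks_from_def by (rule sum_mono2) auto
    finally show ?thesis
      using \<open>a \<in> C\<close> by (intro exI[of _ "d a"]) simp
  qed
  then show thesis by (rule that)
qed

lemma path_sum_frequently_ge:
  assumes t: "tracial_vec t" and "C \<in> relevant_components t" and "lambda_comp E src rng C > 0"
  shows "\<exists>c>0. \<forall>N. \<exists>k\<ge>N. path_sum E src rng t k \<ge> c * lambda_comp E src rng C ^ k"
proof -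
  let ?l = "lambda_comp E src rng C"
  obtain u where C: "C \<in> components E src rng" and "t u \<noteq> 0" and "communicated E src rng u C"
    using assms(2) unfolding relevant_components_def by blast
  then have "t u > 0" using t unfolding tracial_vec_def by (simp add: order_less_le)
  obtain D where D: "\<And>N. \<exists>d\<le>D. ?l ^ N \<le> walks_from (d + N) u"
    using walks_from_ge_lambda_pow[OF C \<open>communicated E src rng u C\<close>] by blast
  define L where "L = max 1 ?l"
  define c where "c = t u / L ^ D"
  have "L \<ge> 1" unfolding L_def by simp
  have "c > 0" unfolding c_def using \<open>t u > 0\<close> \<open>L \<ge> 1\<close> by simp
  have "\<exists>k\<ge>N. path_sum E src rng t k \<ge> c * ?l ^ k" for N
  proof -
    obtain d where "d \<le> D" and "?l ^ N \<le> walks_from (d + N) u" using D by blast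
    have "?l ^ d \<le> L ^ D"
    proof -
      have "?l ^ d \<le> L ^ d" unfolding L_def using assms(3) by (intro power_mono) auto
      also have "\<dots> \<le> L ^ D" using \<open>L \<ge> 1\<close> \<open>d \<le> D\<close> by (rule power_increasing[rotated])
      finally show ?thesis .
    qed
    have "c * ?l ^ (d + N) = t u * ?l ^ N * (?l ^ d / L ^ D)"
      unfolding c_def by (simp add: power_add field_simps)
    also have "\<dots> \<le> t u * ?l ^ N * 1"
      using \<open>?l ^ d \<le> L ^ D\<close> \<open>L \<ge> 1\<close> \<open>t u > 0\<close> assms(3)
      by (intro mult_left_mono) (auto simp: divide_le_eq_1)
    also have "\<dots> \<le> t u * walks_from (d + N) u"
      using \<open>?l ^ N \<le> walks_from (d + N) u\<close> \<open>t u > 0\<close> by simp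
    also have "\<dots> \<le> path_sum E src rng t (d + N)"
      by (rule path_sum_ge_term[OF t])
    finally show ?thesis by (intro exI[of _ "d + N"]) simp
  qed
  with \<open>c > 0\<close> show ?thesis by blast
qed

lemma lambda_relevant_eq_0_if_eventually_zero:
  assumes t: "tracial_vec t" and "\<forall>\<^sub>F k in sequentially. path_sum E src rng t k = 0"
    and C: "C \<in> relevant_components t"
  shows "lambda_comp E src rng C = 0"
proof (rule ccontr)
  assume "lambda_comp E src rng C \<noteq> 0"
  with lambda_comp_nonneg[of C] C have pos: "lambda_comp E src rng C > 0"
    unfolding relevant_components_def by fastforce
  from path_sum_frequently_ge[OF t C pos] obtain c where "c > 0"
    and freq: "\<And>N. \<exists>k\<ge>N. path_sum E src rng t k \<ge> c * lambda_comp E src rng C ^ k" by blast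
  from assms(2) obtain N where N: "\<And>k. k \<ge> N \<Longrightarrow> path_sum E src rng t k = 0"
    unfolding eventually_sequentially by blast
  from freq[of N] obtain k where "k \<ge> N" and "path_sum E src rng t k \<ge> c * lambda_comp E src rng C ^ k"
    by blast
  moreover have "c * lambda_comp E src rng C ^ k > 0" using \<open>c > 0\<close> pos by simp
  ultimately show False using N by fastforce
qed

lemma path_sum_LIMSEQ_0_imp_eventually_0:
  assumes t: "tracial_vec t" and lim: "path_sum E src rng t \<longlonglongrightarrow> 0"
  shows "\<forall>\<^sub>F k in sequentially. path_sum E src rng t k = 0"
proof -
  define m where "m = Min (t ` {u. t u \<noteq> 0})"
  have fin: "finite (t ` {u. t u \<noteq> 0})" by simp
  have "t ` {u. t u \<noteq> 0} \<noteq> {}"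
    using relevant_components_nonempty[OF t] unfolding relevant_components_def by blast
  moreover have "t u \<ge> 0" for u using t unfolding tracial_vec_def by blast
  ultimately have "m > 0"
    unfolding m_def using fin by (subst Min_gr_iff) (auto simp: order_less_le)
  have m_le: "m \<le> t u" if "t u \<noteq> 0" for u
    unfolding m_def using fin that by simp
  have "\<forall>\<^sub>F k in sequentially. path_sum E src rng t k < m"
    using order_tendstoD(2)[OF lim \<open>m > 0\<close>] .
  then show ?thesis
    by (rule eventually_mono) (use path_sum_ge_weight[OF t] m_le in fastforce)
qed

lemma max_lambda_relevant_ge_1:
  assumes t: "tracial_vec t" and nz: "\<not> (\<forall>\<^sub>F k in sequentially. path_sum E src rng t k = 0)"
  shows "Max (lambda_comp E src rng ` relevant_components t) \<ge> 1"
proof (rule ccontr)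
  let ?L = "Max (lambda_comp E src rng ` relevant_components t)"
  assume "\<not> ?L \<ge> 1"
  have fin: "finite (lambda_comp E src rng ` relevant_components t)"
    using finite_relevant_components by simp
  have ne: "lambda_comp E src rng ` relevant_components t \<noteq> {}"
    using relevant_components_nonempty[OF t] by simp
  have "?L \<ge> 0"
    using Max_in[OF fin ne] lambda_comp_nonneg unfolding relevant_components_def by auto
  define \<mu> where "\<mu> = (1 + ?L) / 2"
  have "0 < \<mu>" "\<mu> < 1" using \<open>?L \<ge> 0\<close> \<open>\<not> ?L \<ge> 1\<close> unfolding \<mu>_def by auto
  have "lambda_comp E src rng C \<le> \<mu>" if "C \<in> relevant_components t" for C
  proof -
    have "lambda_comp E src rng C \<le> ?L" using fin that by simp
    then show ?thesis using \<open>\<not> ?L \<ge> 1\<close> unfolding \<mu>_def by (simp add: field_simps)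
  qed
  with \<open>0 < \<mu>\<close> have "poly_exp_bounded \<mu> (path_sum E src rng t)"
    by (intro path_sum_poly_exp_bounded)
  then have "path_sum E src rng t \<longlonglongrightarrow> 0"
    using poly_exp_bounded_LIMSEQ_0 \<open>0 < \<mu>\<close> \<open>\<mu> < 1\<close> by blast
  with nz show False
    using path_sum_LIMSEQ_0_imp_eventually_0[OF t] by blast
qed

lemma entropy_eq_ln_max_lambda:
  assumes t: "tracial_vec t" and nz: "\<not> (\<forall>\<^sub>F k in sequentially. path_sum E src rng t k = 0)"
  shows "entropy E src rng t = ereal (ln (Max (lambda_comp E src rng ` relevant_components t)))"
proof -
  let ?L = "Max (lambda_comp E src rng ` relevant_components t)"
  let ?X = "\<lambda>k. ereal (log0 (path_sum E src rng t k) / real k)"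
  have "?L \<ge> 1" by (rule max_lambda_relevant_ge_1[OF t nz])
  have "?L \<in> lambda_comp E src rng ` relevant_components t"
    using finite_relevant_components relevant_components_nonempty[OF t] by simp
  then obtain C where C: "C \<in> relevant_components t" and "lambda_comp E src rng C = ?L" by auto
  have "lambda_comp E src rng C' \<le> ?L" if "C' \<in> relevant_components t" for C'
    using finite_relevant_components that by simp
  then have "poly_exp_bounded ?L (path_sum E src rng t)"
    using \<open>?L \<ge> 1\<close> by (intro path_sum_poly_exp_bounded) auto
  then have "limsup ?X \<le> ereal (ln ?L)"
    using limsup_log0_le \<open>?L \<ge> 1\<close> path_sum_nonneg[OF t] by blast
  moreover have "ereal (ln ?L) \<le> limsup ?X"
  proof -
    from path_sum_frequently_ge[OF t C] \<open>lambda_comp E src rng C = ?L\<close> \<open>?L \<ge> 1\<close>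
    obtain c where "c > 0" and "\<And>N. \<exists>k\<ge>N. path_sum E src rng t k \<ge> c * ?L ^ k" by auto
    then show ?thesis using \<open>?L \<ge> 1\<close> by (intro limsup_log0_ge) auto
  qed
  ultimately show ?thesis
    using nz unfolding entropy_def by simp
qed

end

theorem proposition8p6:
  fixes E :: "'e::finite set" and src rng :: "'e::finite \<Rightarrow> 'v::finite" and t :: "'v \<Rightarrow> real"
  assumes "tracial_vec t"
  shows "entropy E src rng t =
    ereal (Max {log0 (lambda_comp E src rng C) | C.
                 C \<in> components E src rng \<and> (\<exists>v. t v \<noteq> 0 \<and> communicated E src rng v C)})"
proof -
  interpret finite_graph E src rng .
  let ?\<Lambda> = "lambda_comp E src rng ` relevant_components t"
  have set_eq: "{log0 (lambda_comp E src rng C) | C.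
      C \<in> components E src rng \<and> (\<exists>v. t v \<noteq> 0 \<and> communicated E src rng v C)} = log0 ` ?\<Lambda>"
    unfolding relevant_components_def by auto
  show ?thesis
  proof (cases "\<forall>\<^sub>F k in sequentially. path_sum E src rng t k = 0")
    case True
    then have "?\<Lambda> = {0}"
      using lambda_relevant_eq_0_if_eventually_zero[OF assms True] relevant_components_nonempty[OF assms]
      by auto
    then show ?thesis using True unfolding entropy_def set_eq by (simp add: log0_def)
  next
    case False
    have "Max (log0 ` ?\<Lambda>) = ln (Max ?\<Lambda>)"
      using finite_relevant_components relevant_components_nonempty[OF assms]
        max_lambda_relevant_ge_1[OF assms False] lambda_comp_nonneg
      by (intro Max_log0_image) (auto simp: relevant_components_def)
    then show ?thesis
      unfolding set_eq entropy_eq_ln_max_lambda[OF assms False] by simp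
  qed
qed

end
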